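(* Let $k\ge 2$ and let $\mathcal{U}_k$ be the graph with vertex set $\{v_1,\ldots,v_{3k-2}\}$ in which, for $i\ne j$, $v_i$ and $v_j$ are adjacent if and only if (up to swapping $i$ and $j$) one of the following holds: (1) $1\le i,j\le k$; (2) $1\le i\le k$ and $k+1\le j\le 2k-1$; (3) $k+1\le i\le 2k-1$ and $2k\le j\le 3k-2$; (4) $1\le i\le k-1$ and $2k\le j\le 3k-i-1$. Then $m(\mathcal{U}_k)=k+1$.
   Context: All graphs are finite, simple and undirected. A list assignment $L$ for a graph $G$ assigns to each vertex $v$ a set $L(v)$ of colors; an $L$-coloring is a proper vertex coloring $c$ of $G$ with $c(v)\in L(v)$ for every vertex $v$. A $k$-list assignment is a list assignment with $|L(v)|=k$ for all $v$. $G$ is uniquely $k$-list colorable (U$k$LC) if there exists a $k$-list assignment $L$ such that $G$ has exactly one $L$-coloring. $G$ has property $M(k)$ if it is not U$k$LC, i.e. for every $k$-list assignment $L$, $G$ has either no $L$-coloring or at least two $L$-colorings. The m-number $m(G)$ is the least integer $k\ge 1$ such that $G$ has property $M(k)$. (Every U$k$LC graph is also U$(k-1)$LC, so $G$ is U$k$LC iff $k<m(G)$.) *)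

theory Defs
  imports Main
begin

text \<open>A finite simple graph is given by a vertex set V and a symmetric,
irreflexive adjacency relation E (only its restriction to V matters).
Colours are natural numbers.\<close>

definition is_L_coloring :: "'a set \<Rightarrow> ('a \<Rightarrow> 'a \<Rightarrow> bool) \<Rightarrow> ('a \<Rightarrow> nat set) \<Rightarrow> ('a \<Rightarrow> nat) \<Rightarrow> bool" where
  "is_L_coloring V E L c \<longleftrightarrow>
     (\<forall>v\<in>V. c v \<in> L v) \<and> (\<forall>u\<in>V. \<forall>v\<in>V. E u v \<longrightarrow> c u \<noteq> c v)"

definition unique_L_coloring :: "'a set \<Rightarrow> ('a \<Rightarrow> 'a \<Rightarrow> bool) \<Rightarrow> ('a \<Rightarrow> nat set) \<Rightarrow> bool" where
  "unique_L_coloring V E L \<longleftrightarrow>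
     (\<exists>c. is_L_coloring V E L c \<and>
          (\<forall>c'. is_L_coloring V E L c' \<longrightarrow> (\<forall>v\<in>V. c' v = c v)))"

definition is_k_list_assignment :: "'a set \<Rightarrow> nat \<Rightarrow> ('a \<Rightarrow> nat set) \<Rightarrow> bool" where
  "is_k_list_assignment V k L \<longleftrightarrow> (\<forall>v\<in>V. finite (L v) \<and> card (L v) = k)"

definition uniquely_list_colorable :: "'a set \<Rightarrow> ('a \<Rightarrow> 'a \<Rightarrow> bool) \<Rightarrow> nat \<Rightarrow> bool" where
  "uniquely_list_colorable V E k \<longleftrightarrow>
     (\<exists>L. is_k_list_assignment V k L \<and> unique_L_coloring V E L)"

definition property_M :: "'a set \<Rightarrow> ('a \<Rightarrow> 'a \<Rightarrow> bool) \<Rightarrow> nat \<Rightarrow> bool" where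
  "property_M V E k \<longleftrightarrow> \<not> uniquely_list_colorable V E k"

definition m_number :: "'a set \<Rightarrow> ('a \<Rightarrow> 'a \<Rightarrow> bool) \<Rightarrow> nat" where
  "m_number V E = (LEAST k. 1 \<le> k \<and> property_M V E k)"

definition Uk_vertices :: "nat \<Rightarrow> nat set" where
  "Uk_vertices k = {1..3*k-2}"

definition Uk_rel :: "nat \<Rightarrow> nat \<Rightarrow> nat \<Rightarrow> bool" where
  "Uk_rel k i j \<longleftrightarrow>
     (1 \<le> i \<and> i \<le> k \<and> 1 \<le> j \<and> j \<le> k) \<or>
     (1 \<le> i \<and> i \<le> k \<and> k+1 \<le> j \<and> j \<le> 2*k-1) \<or>
     (k+1 \<le> i \<and> i \<le> 2*k-1 \<and> 2*k \<le> j \<and> j \<le> 3*k-2) \<or>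
     (1 \<le> i \<and> i \<le> k-1 \<and> 2*k \<le> j \<and> j \<le> 3*k-i-1)"

definition Uk_adj :: "nat \<Rightarrow> nat \<Rightarrow> nat \<Rightarrow> bool" where
  "Uk_adj k i j \<longleftrightarrow> i \<noteq> j \<and> (Uk_rel k i j \<or> Uk_rel k j i)"

end

theory Submission
  imports Defs Complex_Main "HOL-Library.FuncSet"
begin

(* Lower bound: give the clique v_1..v_k the list {1..k}, a middle vertex v_b the list
   {b} u {1..k-1} and an outer vertex v_c the list {3k-c} u {k+1..2k-1}.  Any colouring
   uses all of {1..k} on the clique, which forces v_b to colour b and then v_c to 3k-c;
   the outer vertices in turn forbid v_a every colour above a, so the clique is coloured
   by the identity.  Shrinking the lists around this unique colouring gives unique
   j-list colourings for every j <= k.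

   Upper bound: U_k has (k-1)(3k-1) < (3k-2)k edges, which is the sum of |L v| - 1 for any
   (k+1)-list assignment L.  By the coefficient formula of the Combinatorial
   Nullstellensatz the Lagrange-weighted sum of the graph polynomial over all choices
   x in the product of the lists then vanishes.  All weights are nonzero and only proper
   colourings contribute, so the number of L-colourings cannot be exactly one. *)

definition lagrange_weight :: "nat set \<Rightarrow> nat \<Rightarrow> real" where
  "lagrange_weight S a = 1 / (\<Prod>b\<in>S - {a}. real a - real b)"

definition divided_difference :: "nat set \<Rightarrow> (real \<Rightarrow> real) \<Rightarrow> real" where
  "divided_difference S f = (\<Sum>a\<in>S. f (real a) * lagrange_weight S a)"

lemma divided_difference_diff:
  "divided_difference S (\<lambda>t. f t - g t) = divided_difference S f - divided_difference S g"
  unfolding divided_difference_def by (simp add: sum_subtractf left_diff_distrib)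

lemma divided_difference_add:
  "divided_difference S (\<lambda>t. f t + g t) = divided_difference S f + divided_difference S g"
  unfolding divided_difference_def by (simp add: sum.distrib distrib_right)

lemma divided_difference_cmult:
  "divided_difference S (\<lambda>t. c * f t) = c * divided_difference S f"
  unfolding divided_difference_def by (simp add: sum_distrib_left mult.assoc)

lemma divided_difference_singleton: "divided_difference {a} f = f (real a)"
  unfolding divided_difference_def lagrange_weight_def by simp

lemma divided_difference_linear_factor:
  assumes "finite S" "c \<in> S"
  shows "divided_difference S (\<lambda>t. (t - real c) * f t) = divided_difference (S - {c}) f"
proof -
  have "divided_difference S (\<lambda>t. (t - real c) * f t)
      = (\<Sum>a\<in>S - {c}. (real a - real c) * f (real a) * lagrange_weight S a)"
    unfolding divided_difference_def using assms by (simp add: sum.remove)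
  also have "\<dots> = (\<Sum>a\<in>S - {c}. f (real a) * lagrange_weight (S - {c}) a)"
  proof (rule sum.cong)
    fix a assume a: "a \<in> S - {c}"
    have "S - {a} = insert c (S - {c} - {a})" using a assms by auto
    then have "(\<Prod>b\<in>S - {a}. real a - real b)
        = (real a - real c) * (\<Prod>b\<in>S - {c} - {a}. real a - real b)"
      using assms by simp
    then show "(real a - real c) * f (real a) * lagrange_weight S a
        = f (real a) * lagrange_weight (S - {c}) a"
      using a unfolding lagrange_weight_def by simp
  qed simp
  finally show ?thesis unfolding divided_difference_def .
qed

lemma divided_difference_const_one:
  assumes "finite S" "2 \<le> card S"
  shows "divided_difference S (\<lambda>_. 1) = 0"
  using assms
proof (induction "card S" arbitrary: S rule: less_induct)
  case less
  obtain c d where cd: "c \<in> S" "d \<in> S" "c \<noteq> d"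
    using less.prems card_le_Suc0_iff_eq[of S] by auto
  have "divided_difference (S - {c}) (\<lambda>_. 1) = divided_difference (S - {d}) (\<lambda>_. 1)"
  proof (cases "card S = 2")
    case True
    then have "S = {c, d}" using cd less.prems by (intro card_subset_eq [symmetric]) auto
    then show ?thesis using cd by (simp add: insert_Diff_if divided_difference_singleton)
  next
    case False
    then show ?thesis using less cd by (simp add: less.hyps)
  qed
  moreover have "(real d - real c) * divided_difference S (\<lambda>_. 1)
      = divided_difference S (\<lambda>t. (t - real c) * 1) - divided_difference S (\<lambda>t. (t - real d) * 1)"
    by (simp add: divided_difference_diff [symmetric] divided_difference_cmult [symmetric]
        algebra_simps)
  ultimately show ?case
    using cd less.prems
    by (simp add: divided_difference_linear_factor del: mult_1_right)
qed

lemma divided_difference_power: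
  assumes "finite S" "e + 2 \<le> card S"
  shows "divided_difference S (\<lambda>t. t ^ e) = 0"
  using assms
proof (induction e arbitrary: S)
  case 0
  then show ?case using divided_difference_const_one by simp
next
  case (Suc e)
  obtain c where c: "c \<in> S" using Suc.prems by fastforce
  have "divided_difference S (\<lambda>t. t ^ Suc e)
      = divided_difference S (\<lambda>t. (t - real c) * t ^ e + real c * t ^ e)"
    by (simp add: algebra_simps)
  also have "\<dots> = divided_difference (S - {c}) (\<lambda>t. t ^ e)
                    + real c * divided_difference S (\<lambda>t. t ^ e)"
    using Suc.prems(1) c
    by (simp add: divided_difference_add divided_difference_cmult divided_difference_linear_factor)
  also have "\<dots> = 0" using Suc.IH[of "S - {c}"] Suc.IH[of S] Suc.prems c by simp
  finally show ?case .
qed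

text \<open>For a polynomial \<open>g\<close> of degree at most \<open>\<Sum>v. |L v| - 1\<close>, the sum of
  \<open>weighted_monomial V L 0 x * g x\<close> over all \<open>x\<close> in the product of the lists is the
  coefficient of \<open>\<Prod>v. x\<^sub>v ^ (|L v| - 1)\<close> in \<open>g\<close>.\<close>
definition weighted_monomial ::
    "'a set \<Rightarrow> ('a \<Rightarrow> nat set) \<Rightarrow> ('a \<Rightarrow> nat) \<Rightarrow> ('a \<Rightarrow> nat) \<Rightarrow> real" where
  "weighted_monomial V L e x = (\<Prod>v\<in>V. real (x v) ^ e v * lagrange_weight (L v) (x v))"

definition graph_polynomial :: "('a \<times> 'a) set \<Rightarrow> ('a \<Rightarrow> nat) \<Rightarrow> real" where
  "graph_polynomial F x = (\<Prod>(u, v)\<in>F. real (x u) - real (x v))"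

lemma weighted_monomial_Suc_exponent:
  assumes "finite V" "i \<in> V"
  shows "weighted_monomial V L (e(i := Suc (e i))) x = real (x i) * weighted_monomial V L e x"
proof -
  have "(\<Prod>v\<in>V - {i}. real (x v) ^ (e(i := Suc (e i))) v * lagrange_weight (L v) (x v))
      = (\<Prod>v\<in>V - {i}. real (x v) ^ e v * lagrange_weight (L v) (x v))"
    by (rule prod.cong) auto
  then show ?thesis
    unfolding weighted_monomial_def using assms by (simp add: prod.remove)
qed

lemma sum_Suc_update:
  assumes "finite V" "i \<in> V"
  shows "sum (e(i := Suc (e i))) V = Suc (sum e V)"
proof -
  have "sum (e(i := Suc (e i))) V = (\<Sum>v\<in>V. e v + (if v = i then 1 else 0))"
    by (rule sum.cong) auto
  then show ?thesis using assms by (simp add: sum.distrib)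
qed

lemma sum_weighted_monomial_eq_0:
  assumes "finite V" "\<forall>v\<in>V. finite (L v)" "sum e V < (\<Sum>v\<in>V. card (L v) - 1)"
  shows "(\<Sum>x\<in>PiE V L. weighted_monomial V L e x) = 0"
proof -
  obtain v where v: "v \<in> V" "e v + 2 \<le> card (L v)"
  proof (rule ccontr)
    assume "\<not> thesis"
    then have "\<forall>v\<in>V. card (L v) - 1 \<le> e v" using that by force
    then have "(\<Sum>v\<in>V. card (L v) - 1) \<le> sum e V" by (intro sum_mono) auto
    with assms(3) show False by simp
  qed
  have "(\<Sum>x\<in>PiE V L. weighted_monomial V L e x)
      = (\<Prod>v\<in>V. divided_difference (L v) (\<lambda>t. t ^ e v))"
    unfolding weighted_monomial_def divided_difference_def
    using assms(1,2) by (simp add: prod_sum_PiE)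
  also have "\<dots> = 0"
    using v assms(1,2) divided_difference_power by (metis prod_zero_iff)
  finally show ?thesis .
qed

lemma sum_weighted_monomial_graph_polynomial_eq_0:
  assumes V: "finite V" and L: "\<forall>v\<in>V. finite (L v)" and F: "finite F" "F \<subseteq> V \<times> V"
    and deg: "sum e V + card F < (\<Sum>v\<in>V. card (L v) - 1)"
  shows "(\<Sum>x\<in>PiE V L. weighted_monomial V L e x * graph_polynomial F x) = 0"
  using F deg
proof (induction F arbitrary: e rule: finite_induct)
  case empty
  then show ?case
    using sum_weighted_monomial_eq_0[OF V L] by (simp add: graph_polynomial_def)
next
  case (insert p F)
  obtain i j where p: "p = (i, j)" and ij: "i \<in> V" "j \<in> V" using insert.prems by force
  let ?ei = "e(i := Suc (e i))" and ?ej = "e(j := Suc (e j))"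
  have "(\<Sum>x\<in>PiE V L. weighted_monomial V L e x * graph_polynomial (insert p F) x)
      = (\<Sum>x\<in>PiE V L. weighted_monomial V L ?ei x * graph_polynomial F x
                      - weighted_monomial V L ?ej x * graph_polynomial F x)"
    using insert.hyps p
    by (intro sum.cong) (simp_all add: graph_polynomial_def weighted_monomial_Suc_exponent[OF V ij(1)]
        weighted_monomial_Suc_exponent[OF V ij(2)] algebra_simps)
  also have "\<dots> = 0"
    using insert sum_Suc_update[OF V ij(1), of e] sum_Suc_update[OF V ij(2), of e]
    by (simp add: sum_subtractf)
  finally show ?case .
qed

lemma not_unique_L_coloring_if_few_edges:
  assumes V: "finite V" and L: "\<forall>v\<in>V. finite (L v)" and F: "F \<subseteq> V \<times> V"
    and F_edges: "\<forall>(u, v)\<in>F. E u v"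
    and F_covers: "\<forall>u\<in>V. \<forall>v\<in>V. E u v \<longrightarrow> (u, v) \<in> F \<or> (v, u) \<in> F"
    and few_edges: "card F < (\<Sum>v\<in>V. card (L v) - 1)"
  shows "\<not> unique_L_coloring V E L"
proof
  assume "unique_L_coloring V E L"
  then obtain \<phi> where col: "is_L_coloring V E L \<phi>"
    and uniq: "\<And>c. is_L_coloring V E L c \<Longrightarrow> \<forall>v\<in>V. c v = \<phi> v"
    unfolding unique_L_coloring_def by blast
  have finF: "finite F" using V F finite_subset by blast
  define x0 where "x0 = restrict \<phi> V"
  let ?M = "weighted_monomial V L (\<lambda>_. 0)" and ?P = "graph_polynomial F"
  have x0: "x0 \<in> PiE V L" using col unfolding x0_def is_L_coloring_def by auto
  have P_zero: "?P x = 0" if x: "x \<in> PiE V L - {x0}" for x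
  proof -
    have "\<not> is_L_coloring V E L x"
    proof
      assume "is_L_coloring V E L x"
      then have "\<forall>v\<in>V. x v = x0 v" using uniq unfolding x0_def by simp
      then have "x = x0" using x x0 by (intro PiE_ext) auto
      with x show False by simp
    qed
    then obtain u v where "u \<in> V" "v \<in> V" "E u v" "x u = x v"
      using x unfolding is_L_coloring_def by (auto simp: PiE_iff)
    then obtain a b where "(a, b) \<in> F" "x a = x b" using F_covers by metis
    then show ?thesis
      unfolding graph_polynomial_def by (intro prod_zero[OF finF] bexI[of _ "(a, b)"]) simp_all
  qed
  have "0 = (\<Sum>x\<in>PiE V L. ?M x * ?P x)"
    using sum_weighted_monomial_graph_polynomial_eq_0[OF V L finF F] few_edges by simp
  also have "\<dots> = ?M x0 * ?P x0"
    using x0 V L P_zero by (subst sum.remove[of _ x0]) (auto intro: finite_PiE)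
  finally have "?M x0 * ?P x0 = 0" by simp
  moreover have "?M x0 \<noteq> 0"
    unfolding weighted_monomial_def lagrange_weight_def using V L by (auto simp: prod_zero_iff)
  moreover have "?P x0 \<noteq> 0"
  proof -
    have "\<forall>(u, v)\<in>F. x0 u \<noteq> x0 v"
      using F F_edges col unfolding x0_def is_L_coloring_def by fastforce
    then show ?thesis unfolding graph_polynomial_def using finF by (auto simp: prod_zero_iff)
  qed
  ultimately show False by simp
qed

lemma uniquely_list_colorable_mono:
  assumes "uniquely_list_colorable V E k" "1 \<le> j" "j \<le> k"
  shows "uniquely_list_colorable V E j"
proof -
  obtain L \<phi> where L: "is_k_list_assignment V k L" and col: "is_L_coloring V E L \<phi>"
    and uniq: "\<And>c. is_L_coloring V E L c \<Longrightarrow> \<forall>v\<in>V. c v = \<phi> v"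
    using assms(1) unfolding uniquely_list_colorable_def unique_L_coloring_def by blast
  have "\<exists>T. T \<subseteq> L v - {\<phi> v} \<and> card T = j - 1" if v: "v \<in> V" for v
  proof -
    have "card (L v - {\<phi> v}) = k - 1"
      using L col v unfolding is_k_list_assignment_def is_L_coloring_def by simp
    then show ?thesis using assms(3) by (metis obtain_subset_with_card_n diff_le_mono)
  qed
  then obtain T where T: "\<And>v. v \<in> V \<Longrightarrow> T v \<subseteq> L v - {\<phi> v} \<and> card (T v) = j - 1"
    by metis
  define L' where "L' v = insert (\<phi> v) (T v)" for v
  have "is_k_list_assignment V j L'"
    unfolding is_k_list_assignment_def
  proof
    fix v assume v: "v \<in> V"
    have "finite (T v)"
      using T[OF v] L v unfolding is_k_list_assignment_def by (meson finite_Diff finite_subset)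
    moreover have "\<phi> v \<notin> T v" using T[OF v] by blast
    ultimately show "finite (L' v) \<and> card (L' v) = j" using T[OF v] assms(2) unfolding L'_def by simp
  qed
  moreover have "unique_L_coloring V E L'"
    unfolding unique_L_coloring_def
  proof (intro exI conjI allI impI)
    show "is_L_coloring V E L' \<phi>" using col unfolding is_L_coloring_def L'_def by auto
  next
    fix c assume c: "is_L_coloring V E L' c"
    have "c v \<in> L v" if "v \<in> V" for v
      using c T[OF that] col that unfolding is_L_coloring_def L'_def by auto
    then have "is_L_coloring V E L c"
      using c unfolding is_L_coloring_def by blast
    then show "\<forall>v\<in>V. c v = \<phi> v" by (rule uniq)
  qed
  ultimately show ?thesis unfolding uniquely_list_colorable_def by blast
qed

lemma Uk_adj_sym: "Uk_adj k u v = Uk_adj k v u"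
  unfolding Uk_adj_def by auto

lemma Uk_adj_clique:
  "1 \<le> a \<Longrightarrow> a \<le> k \<Longrightarrow> 1 \<le> a' \<Longrightarrow> a' \<le> k \<Longrightarrow> a \<noteq> a' \<Longrightarrow> Uk_adj k a a'"
  unfolding Uk_adj_def Uk_rel_def by simp

lemma Uk_adj_clique_middle:
  "1 \<le> a \<Longrightarrow> a \<le> k \<Longrightarrow> k + 1 \<le> b \<Longrightarrow> b \<le> 2*k - 1 \<Longrightarrow> Uk_adj k a b"
  unfolding Uk_adj_def Uk_rel_def by simp

lemma Uk_adj_middle_outer:
  "k + 1 \<le> b \<Longrightarrow> b \<le> 2*k - 1 \<Longrightarrow> 2*k \<le> c \<Longrightarrow> c \<le> 3*k - 2 \<Longrightarrow> Uk_adj k b c"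
  unfolding Uk_adj_def Uk_rel_def by simp

lemma Uk_adj_clique_outer:
  "1 \<le> a \<Longrightarrow> a \<le> k - 1 \<Longrightarrow> 2*k \<le> c \<Longrightarrow> c \<le> 3*k - a - 1 \<Longrightarrow> Uk_adj k a c"
  unfolding Uk_adj_def Uk_rel_def by simp

definition Uk_lists :: "nat \<Rightarrow> nat \<Rightarrow> nat set" where
  "Uk_lists k v =
     (if v \<le> k then {1..k}
      else if v \<le> 2*k - 1 then insert v {1..k-1}
      else insert (3*k - v) {k+1..2*k-1})"

definition Uk_coloring :: "nat \<Rightarrow> nat \<Rightarrow> nat" where
  "Uk_coloring k v = (if v \<le> 2*k - 1 then v else 3*k - v)"

lemma Uk_lists_k_list_assignment:
  assumes "2 \<le> k"
  shows "is_k_list_assignment (Uk_vertices k) k (Uk_lists k)"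
  using assms unfolding is_k_list_assignment_def Uk_lists_def Uk_vertices_def by auto

lemma Uk_coloring_is_L_coloring:
  assumes "2 \<le> k"
  shows "is_L_coloring (Uk_vertices k) (Uk_adj k) (Uk_lists k) (Uk_coloring k)"
  unfolding is_L_coloring_def
proof (intro conjI ballI impI)
  fix v assume "v \<in> Uk_vertices k"
  then show "Uk_coloring k v \<in> Uk_lists k v"
    using assms unfolding Uk_lists_def Uk_coloring_def Uk_vertices_def by auto
next
  fix u v assume "u \<in> Uk_vertices k" "v \<in> Uk_vertices k" "Uk_adj k u v"
  then show "Uk_coloring k u \<noteq> Uk_coloring k v"
    using assms unfolding Uk_coloring_def Uk_vertices_def Uk_adj_def Uk_rel_def by auto
qed

locale Uk_L_coloring =
  fixes k :: nat and \<psi> :: "nat \<Rightarrow> nat"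
  assumes k_ge_2: "2 \<le> k"
    and coloring: "is_L_coloring (Uk_vertices k) (Uk_adj k) (Uk_lists k) \<psi>"
begin

lemma part_bounds: "k \<le> 2*k - 1" "2*k - 1 \<le> 3*k - 2"
  using k_ge_2 by simp_all

lemma color_in_list: "1 \<le> v \<Longrightarrow> v \<le> 3*k - 2 \<Longrightarrow> \<psi> v \<in> Uk_lists k v"
  using coloring unfolding is_L_coloring_def Uk_vertices_def by auto

lemma colors_differ:
  "1 \<le> u \<Longrightarrow> u \<le> 3*k - 2 \<Longrightarrow> 1 \<le> v \<Longrightarrow> v \<le> 3*k - 2 \<Longrightarrow> Uk_adj k u v \<Longrightarrow>
    \<psi> u \<noteq> \<psi> v"
  using coloring unfolding is_L_coloring_def Uk_vertices_def by auto

lemma clique_color: "a \<in> {1..k} \<Longrightarrow> \<psi> a \<in> {1..k}"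
  using color_in_list[of a] k_ge_2 unfolding Uk_lists_def by auto

lemma inj_on_clique: "inj_on \<psi> {1..k}"
proof (rule inj_onI, rule ccontr)
  fix a a' assume "a \<in> {1..k}" "a' \<in> {1..k}" "\<psi> a = \<psi> a'" "a \<noteq> a'"
  then show False using colors_differ[of a a'] Uk_adj_clique[of a k a'] part_bounds by auto
qed

lemma image_clique: "\<psi> ` {1..k} = {1..k}"
  using clique_color inj_on_clique by (intro endo_inj_surj) auto

lemma middle_color: "k + 1 \<le> b \<Longrightarrow> b \<le> 2*k - 1 \<Longrightarrow> \<psi> b = b"
proof (rule ccontr)
  assume b: "k + 1 \<le> b" "b \<le> 2*k - 1" and "\<psi> b \<noteq> b"
  then have "\<psi> b \<in> {1..k}" using color_in_list[of b] part_bounds unfolding Uk_lists_def by auto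
  then obtain a where "a \<in> {1..k}" "\<psi> a = \<psi> b" using image_clique by (metis imageE)
  then show False using colors_differ[of a b] Uk_adj_clique_middle[of a k b] b part_bounds by auto
qed

lemma outer_color: "2*k \<le> c \<Longrightarrow> c \<le> 3*k - 2 \<Longrightarrow> \<psi> c = 3*k - c"
proof (rule ccontr)
  assume c: "2*k \<le> c" "c \<le> 3*k - 2" and "\<psi> c \<noteq> 3*k - c"
  moreover have "\<not> c \<le> 2*k - 1" "1 \<le> c" using c k_ge_2 by auto
  ultimately have b: "k + 1 \<le> \<psi> c" "\<psi> c \<le> 2*k - 1"
    using color_in_list[of c] unfolding Uk_lists_def by auto
  then have "\<psi> (\<psi> c) = \<psi> c" using middle_color by blast
  then show False using colors_differ[of "\<psi> c" c] Uk_adj_middle_outer[OF b c] b c by auto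
qed

text \<open>The outer vertex \<open>3k - \<psi> a\<close> has colour \<open>\<psi> a\<close>, and is adjacent to \<open>a\<close>
  unless \<open>\<psi> a \<le> a\<close>.\<close>
lemma clique_color_le: "a \<in> {1..k} \<Longrightarrow> \<psi> a \<le> a"
proof (rule ccontr)
  assume a: "a \<in> {1..k}" and "\<not> \<psi> a \<le> a"
  then have s: "a < \<psi> a" "\<psi> a \<le> k" using clique_color by auto
  define c where "c = 3*k - \<psi> a"
  have c: "2*k \<le> c" "c \<le> 3*k - 2" "c \<le> 3*k - a - 1" using s a unfolding c_def by auto
  have "\<psi> c = \<psi> a" using outer_color[OF c(1,2)] s unfolding c_def by simp
  moreover have "Uk_adj k a c" using a s c by (intro Uk_adj_clique_outer) auto
  ultimately show False using colors_differ[of a c] a c k_ge_2 by auto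
qed

lemma clique_color_eq: "a \<in> {1..k} \<Longrightarrow> \<psi> a = a"
proof (induction a rule: less_induct)
  case (less a)
  show ?case
  proof (rule ccontr)
    assume "\<psi> a \<noteq> a"
    then have lt: "\<psi> a < a" using clique_color_le[OF less.prems] by simp
    have "\<psi> (\<psi> a) = \<psi> a" using less.IH[OF lt clique_color[OF less.prems]] .
    then have "\<psi> a = a"
      using inj_on_clique clique_color less.prems by (auto dest: inj_onD)
    with lt show False by simp
  qed
qed

lemma eq_Uk_coloring:
  assumes "v \<in> Uk_vertices k"
  shows "\<psi> v = Uk_coloring k v"
proof -
  consider "v \<in> {1..k}" | "k + 1 \<le> v" "v \<le> 2*k - 1" | "2*k \<le> v" "v \<le> 3*k - 2"
    using assms unfolding Uk_vertices_def by fastforce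
  then show ?thesis
    using clique_color_eq middle_color outer_color k_ge_2 unfolding Uk_coloring_def by cases auto
qed

end

lemma Uk_uniquely_list_colorable:
  assumes "2 \<le> k"
  shows "uniquely_list_colorable (Uk_vertices k) (Uk_adj k) k"
  unfolding uniquely_list_colorable_def unique_L_coloring_def
proof (intro exI conjI allI impI)
  show "is_k_list_assignment (Uk_vertices k) k (Uk_lists k)"
    using assms by (rule Uk_lists_k_list_assignment)
  show "is_L_coloring (Uk_vertices k) (Uk_adj k) (Uk_lists k) (Uk_coloring k)"
    using assms by (rule Uk_coloring_is_L_coloring)
  fix \<psi> assume "is_L_coloring (Uk_vertices k) (Uk_adj k) (Uk_lists k) \<psi>"
  then interpret Uk_L_coloring k \<psi> using assms by unfold_locales
  show "\<forall>v\<in>Uk_vertices k. \<psi> v = Uk_coloring k v" using eq_Uk_coloring by blast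
qed

definition Uk_edges :: "nat \<Rightarrow> (nat \<times> nat) set" where
  "Uk_edges k = {(i, j). i \<in> Uk_vertices k \<and> j \<in> Uk_vertices k \<and> i < j \<and> Uk_adj k i j}"

text \<open>A clique edge \<open>(i, j)\<close> goes to \<open>(j, i)\<close>, below the diagonal; an edge \<open>(i, j)\<close>
  of type (4) satisfies \<open>i < 3k - j \<le> k\<close> and goes to \<open>(i, 3k - j - 1)\<close>, on or above it.\<close>
lemma card_Uk_clique_outer_edges_le:
  "card ({(i, j). 1 \<le> i \<and> i < j \<and> j \<le> k} \<union>
         {(i, j). 1 \<le> i \<and> i \<le> k - 1 \<and> 2*k \<le> j \<and> j \<le> 3*k - i - 1}) \<le> k * (k - 1)"
  (is "card ?X \<le> _")
proof -
  let ?f = "\<lambda>(i, j). if j \<le> k then (j, i) else (i, 3*k - j - 1)"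
  have "card ?X \<le> card ({1..k} \<times> {1..k-1})"
  proof (rule card_inj_on_le)
    show "inj_on ?f ?X" by (auto simp: inj_on_def split: if_splits)
    show "?f ` ?X \<subseteq> {1..k} \<times> {1..k-1}" by (auto split: if_splits)
  qed simp
  then show ?thesis by simp
qed

lemma card_Uk_edges_less:
  assumes "2 \<le> k"
  shows "card (Uk_edges k) < (3*k - 2) * k"
proof -
  define X14 where "X14 = {(i, j). 1 \<le> i \<and> i < j \<and> j \<le> k} \<union>
    {(i, j). 1 \<le> i \<and> i \<le> k - 1 \<and> 2*k \<le> j \<and> j \<le> 3*k - i - 1}"
  define X2 where "X2 = {1..k} \<times> {k+1..2*k-1}"
  define X3 where "X3 = {k+1..2*k-1} \<times> {2*k..3*k-2}"
  have "Uk_edges k \<subseteq> X14 \<union> X2 \<union> X3"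
    unfolding Uk_edges_def Uk_vertices_def Uk_adj_def Uk_rel_def X14_def X2_def X3_def by auto
  moreover have "finite (X14 \<union> X2 \<union> X3)"
    unfolding X14_def X2_def X3_def
    by (rule finite_subset[of _ "{0..3*k} \<times> {0..3*k}"]) auto
  ultimately have "card (Uk_edges k) \<le> card (X14 \<union> X2 \<union> X3)" by (rule card_mono[rotated])
  also have "\<dots> \<le> card X14 + card X2 + card X3"
    by (meson card_Un_le add_le_mono le_trans order_refl)
  also have "\<dots> \<le> k * (k - 1) + k * (k - 1) + (k - 1) * (k - 1)"
    using card_Uk_clique_outer_edges_le[of k] assms unfolding X14_def X2_def X3_def by simp
  also have "\<dots> < (3*k - 2) * k"
  proof -
    obtain m where "k = m + 2" using assms by (metis add.commute le_Suc_ex)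
    then show ?thesis by (simp add: algebra_simps)
  qed
  finally show ?thesis .
qed

lemma Uk_property_M:
  assumes "2 \<le> k"
  shows "property_M (Uk_vertices k) (Uk_adj k) (k + 1)"
  unfolding property_M_def
proof
  assume "uniquely_list_colorable (Uk_vertices k) (Uk_adj k) (k + 1)"
  then obtain L where L: "is_k_list_assignment (Uk_vertices k) (k + 1) L"
    and unique: "unique_L_coloring (Uk_vertices k) (Uk_adj k) L"
    unfolding uniquely_list_colorable_def by blast
  have "(\<Sum>v\<in>Uk_vertices k. card (L v) - 1) = (3*k - 2) * k"
    using L unfolding is_k_list_assignment_def Uk_vertices_def by simp
  then have "\<not> unique_L_coloring (Uk_vertices k) (Uk_adj k) L"
    using L card_Uk_edges_less[OF assms] Uk_adj_sym[of k]
    by (intro not_unique_L_coloring_if_few_edges[where F = "Uk_edges k"])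
      (auto simp: Uk_vertices_def Uk_edges_def is_k_list_assignment_def Uk_adj_def
        intro: linorder_neqE_nat)
  with unique show False by simp
qed

theorem mainTheorem18:
  fixes k :: nat
  assumes "k \<ge> 2"
  shows "m_number (Uk_vertices k) (Uk_adj k) = k + 1"
  unfolding m_number_def
proof (rule Least_equality)
  show "1 \<le> k + 1 \<and> property_M (Uk_vertices k) (Uk_adj k) (k + 1)"
    using Uk_property_M[OF assms] by simp
next
  fix j assume "1 \<le> j \<and> property_M (Uk_vertices k) (Uk_adj k) j"
  then show "k + 1 \<le> j"
    using uniquely_list_colorable_mono[OF Uk_uniquely_list_colorable[OF assms], of j]
    unfolding property_M_def by fastforce
qed

end
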